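(* Assume $\operatorname{rank}(X)=n$ and that there exists $\tilde A=[\tilde a_1\ \cdots\ \tilde a_s]\in\mathbb{R}^{n\times s}$ with pairwise distinct columns such that $\min_{i\in\mathbb{S}}|I_i(\tilde A)|\ge s\,\nu_n(X)$. Then for every $A\in\mathbb{R}^{n\times s}$, if $\phi(A)=\phi(\tilde A)$ then $\mathrm{set}(A)=\mathrm{set}(\tilde A)$.
   Context: Data: integers $n,s,N\ge1$ and a dataset $\varpi^N=((x_1,y_1),\ldots,(x_N,y_N))$ with $x_t\in\mathbb{R}^n$, $y_t\in\mathbb{R}$; $X=[x_1\ \cdots\ x_N]\in\mathbb{R}^{n\times N}$. Let $\mathbb{T}=\{1,\ldots,N\}$, $\mathbb{S}=\{1,\ldots,s\}$. For $A=[a_1\ \cdots\ a_s]\in\mathbb{R}^{n\times s}$, $\mathrm{set}(A)=\{a_1,\ldots,a_s\}$; $\sigma_A:\mathbb{T}\to\mathbb{S}$ is a switching signal satisfying $\sigma_A(t)\in\arg\min_{i\in\mathbb{S}}|y_t-x_t^\top a_i|$ for all $t$, selected uniquely by a fixed rule depending only on $A$ and the data (among all admissible choices, one maximizing $\min_{i}|I_i(A)|$, ties then broken by assigning the smallest admissible index). $I_i(A)=\{t\in\mathbb{T}:\sigma_A(t)=i\}$. $\phi(A)=\big(y_1-x_1^\top a_{\sigma_A(1)},\ldots,y_N-x_N^\top a_{\sigma_A(N)}\big)^\top$. Genericity index: for $X$ with $\operatorname{rank}(X)=n$, $\nu_n(X)$ is the smallest integer $m$ such that for every $\mathcal{S}\subset\mathbb{T}$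 with $|\mathcal{S}|=m$, the submatrix $X_{\mathcal{S}}$ of columns of $X$ indexed by $\mathcal{S}$ has rank $n$. *)

theory Defs
  imports "HOL-Analysis.Analysis"
begin

text \<open>Data: time indices T = {1..N}, mode indices S = {1..s}; regressors
  x t :: real^'n (so n = CARD('n)), outputs y t :: real.  A parameter matrix
  A = [a_1 ... a_s] is represented by its columns A i, i in {1..s}.
  Switching signals are represented as functions nat => nat that are 0 outside T.\<close>

definition colset :: "nat \<Rightarrow> (nat \<Rightarrow> real^'n) \<Rightarrow> (real^'n) set" where
  "colset s A = A ` {1..s}"

definition admissible_signal ::
  "nat \<Rightarrow> nat \<Rightarrow> (nat \<Rightarrow> real^'n) \<Rightarrow> (nat \<Rightarrow> real) \<Rightarrow> (nat \<Rightarrow> real^'n) \<Rightarrow> (nat \<Rightarrow> nat) \<Rightarrow> bool" where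
  "admissible_signal N s x y A \<sigma> \<longleftrightarrow>
     (\<forall>t\<in>{1..N}. \<sigma> t \<in> {1..s} \<and>
        (\<forall>i\<in>{1..s}. \<bar>y t - x t \<bullet> A (\<sigma> t)\<bar> \<le> \<bar>y t - x t \<bullet> A i\<bar>)) \<and>
     (\<forall>t. t \<notin> {1..N} \<longrightarrow> \<sigma> t = 0)"

definition Iset :: "nat \<Rightarrow> (nat \<Rightarrow> nat) \<Rightarrow> nat \<Rightarrow> nat set" where
  "Iset N \<sigma> i = {t \<in> {1..N}. \<sigma> t = i}"

definition min_count :: "nat \<Rightarrow> nat \<Rightarrow> (nat \<Rightarrow> nat) \<Rightarrow> nat" where
  "min_count N s \<sigma> = Min ((\<lambda>i. card (Iset N \<sigma> i)) ` {1..s})"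

definition best_signals ::
  "nat \<Rightarrow> nat \<Rightarrow> (nat \<Rightarrow> real^'n) \<Rightarrow> (nat \<Rightarrow> real) \<Rightarrow> (nat \<Rightarrow> real^'n) \<Rightarrow> (nat \<Rightarrow> nat) set" where
  "best_signals N s x y A =
     {\<sigma>. admissible_signal N s x y A \<sigma> \<and>
          (\<forall>\<sigma>'. admissible_signal N s x y A \<sigma>' \<longrightarrow> min_count N s \<sigma>' \<le> min_count N s \<sigma>)}"

text \<open>Ties broken by assigning the smallest admissible index, i.e. the
  lexicographically smallest sequence (sigma 1, ..., sigma N).\<close>
definition sigmaA ::
  "nat \<Rightarrow> nat \<Rightarrow> (nat \<Rightarrow> real^'n) \<Rightarrow> (nat \<Rightarrow> real) \<Rightarrow> (nat \<Rightarrow> real^'n) \<Rightarrow> nat \<Rightarrow> nat" where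
  "sigmaA N s x y A =
     (THE \<sigma>. \<sigma> \<in> best_signals N s x y A \<and>
        (\<forall>\<sigma>'\<in>best_signals N s x y A. \<sigma>' \<noteq> \<sigma> \<longrightarrow>
           (map \<sigma> [1..<N+1], map \<sigma>' [1..<N+1]) \<in> lexord {(a, b). a < b}))"

definition I_A ::
  "nat \<Rightarrow> nat \<Rightarrow> (nat \<Rightarrow> real^'n) \<Rightarrow> (nat \<Rightarrow> real) \<Rightarrow> (nat \<Rightarrow> real^'n) \<Rightarrow> nat \<Rightarrow> nat set" where
  "I_A N s x y A i = Iset N (sigmaA N s x y A) i"

definition phi ::
  "nat \<Rightarrow> nat \<Rightarrow> (nat \<Rightarrow> real^'n) \<Rightarrow> (nat \<Rightarrow> real) \<Rightarrow> (nat \<Rightarrow> real^'n) \<Rightarrow> nat \<Rightarrow> real" where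
  "phi N s x y A =
     (\<lambda>t. if t \<in> {1..N} then y t - x t \<bullet> A (sigmaA N s x y A t) else 0)"

text \<open>Rank of the submatrix X_S (column rank = dimension of the column span).\<close>
definition subrank :: "(nat \<Rightarrow> real^'n) \<Rightarrow> nat set \<Rightarrow> nat" where
  "subrank x S = dim (span (x ` S))"

definition nu :: "nat \<Rightarrow> (nat \<Rightarrow> real^'n) \<Rightarrow> nat" where
  "nu N x = (LEAST m. \<forall>S. S \<subseteq> {1..N} \<and> card S = m \<longrightarrow> subrank x S = CARD('n))"

end

theory Submission
  imports Defs
begin

text \<open>Fix a column \<open>a\<^sub>i\<close> of \<open>\<tilde>A\<close>. Since \<open>\<sigma>\<^sub>A\<close> distributes the at least \<open>s \<nu>\<^sub>n(X)\<close> time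
  indices of \<open>I\<^sub>i(\<tilde>A)\<close> among \<open>s\<close> modes, some mode \<open>j\<close> receives at least \<open>\<nu>\<^sub>n(X)\<close> of them.
  On these indices \<open>\<phi>(A) = \<phi>(\<tilde>A)\<close> gives \<open>x\<^sub>t\<^sup>T (\<tilde>a\<^sub>i - a\<^sub>j) = 0\<close>, and by definition of
  \<open>\<nu>\<^sub>n(X)\<close> the corresponding regressors span \<open>\<real>\<^sup>n\<close>; hence \<open>\<tilde>a\<^sub>i = a\<^sub>j\<close>. Thus
  \<open>set(\<tilde>A) \<subseteq> set(A)\<close>, and equality follows because \<open>set(\<tilde>A)\<close> has \<open>s\<close> elements.\<close>

lemma ex1_lexord_least:
  fixes F :: "(nat \<Rightarrow> nat) set"
  assumes "F \<noteq> {}" and zero_outside: "\<And>\<sigma> t. \<sigma> \<in> F \<Longrightarrow> t \<notin> {1..N} \<Longrightarrow> \<sigma> t = 0"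
  shows "\<exists>!\<sigma>. \<sigma> \<in> F \<and> (\<forall>\<sigma>'\<in>F. \<sigma>' \<noteq> \<sigma> \<longrightarrow>
           (map \<sigma> [1..<N+1], map \<sigma>' [1..<N+1]) \<in> lexord {(a, b). a < b})"
proof -
  let ?L = "\<lambda>\<sigma>::nat \<Rightarrow> nat. map \<sigma> [1..<N+1]"
  let ?r = "{(a, b). a < (b::nat)}"
  have asym_lex: "(l', l) \<notin> lexord ?r" if "(l, l') \<in> lexord ?r" for l l'
    using that by (intro lexord_asymmetric) (auto intro: asymI)
  have L_inj: "\<sigma> = \<sigma>'" if "\<sigma> \<in> F" "\<sigma>' \<in> F" "?L \<sigma> = ?L \<sigma>'" for \<sigma> \<sigma>'
  proof
    fix t show "\<sigma> t = \<sigma>' t"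
      using that zero_outside[of \<sigma> t] zero_outside[of \<sigma>' t]
      by (cases "t \<in> {1..N}") (auto simp del: upt_Suc)
  qed
  obtain \<sigma>0 where "\<sigma>0 \<in> F" using assms(1) by blast
  then have "?L \<sigma>0 \<in> ?L ` F" by blast
  then obtain l where "l \<in> ?L ` F" and minimal: "\<And>l'. (l', l) \<in> lenlex ?r \<Longrightarrow> l' \<notin> ?L ` F"
    using wfE_min[OF wf_lenlex[OF wf_less]] by metis
  then obtain \<sigma> where \<sigma>: "\<sigma> \<in> F" and l: "l = ?L \<sigma>" by blast
  have least: "(?L \<sigma>, ?L \<sigma>') \<in> lexord ?r" if "\<sigma>' \<in> F" "\<sigma>' \<noteq> \<sigma>" for \<sigma>'
  proof -
    have "?L \<sigma>' \<noteq> ?L \<sigma>" using L_inj \<sigma> that by blast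
    moreover have "(?L \<sigma>', ?L \<sigma>) \<notin> lexord ?r"
      using minimal[of "?L \<sigma>'"] that l by (auto simp: lenlex_conv lexord_lex)
    moreover have "total (lexord ?r)"
      by (rule total_lexord) (auto simp: total_on_def)
    ultimately show ?thesis
      unfolding total_on_def by blast
  qed
  show ?thesis
  proof (rule ex1I[of _ \<sigma>])
    show "\<sigma> \<in> F \<and> (\<forall>\<sigma>'\<in>F. \<sigma>' \<noteq> \<sigma> \<longrightarrow> (?L \<sigma>, ?L \<sigma>') \<in> lexord ?r)"
      using \<sigma> least by simp
  next
    fix \<tau> assume \<tau>: "\<tau> \<in> F \<and> (\<forall>\<sigma>'\<in>F. \<sigma>' \<noteq> \<tau> \<longrightarrow> (?L \<tau>, ?L \<sigma>') \<in> lexord ?r)"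
    show "\<tau> = \<sigma>"
    proof (rule ccontr)
      assume "\<tau> \<noteq> \<sigma>"
      then have "(?L \<sigma>, ?L \<tau>) \<in> lexord ?r" and "(?L \<tau>, ?L \<sigma>) \<in> lexord ?r"
        using least \<tau> \<sigma> by auto
      then show False using asym_lex by blast
    qed
  qed
qed

lemma admissible_signal_exists:
  fixes x :: "nat \<Rightarrow> real^'n"
  assumes "s \<ge> 1"
  shows "\<exists>\<sigma>. admissible_signal N s x y A \<sigma>"
proof -
  let ?res = "\<lambda>t i. \<bar>y t - x t \<bullet> A i\<bar>"
  have nonempty: "{1..s} \<noteq> {}" using assms by simp
  have min_in: "arg_min_on (?res t) {1..s} \<in> {1..s}" for t
    by (rule arg_min_if_finite(1)) (use nonempty in auto)
  have min_le: "?res t (arg_min_on (?res t) {1..s}) \<le> ?res t i" if "i \<in> {1..s}" for t i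
    by (rule arg_min_least) (use nonempty that in auto)
  have "admissible_signal N s x y A
      (\<lambda>t. if t \<in> {1..N} then arg_min_on (?res t) {1..s} else 0)"
    unfolding admissible_signal_def using min_in min_le by simp
  then show ?thesis by blast
qed

lemma best_signals_nonempty:
  fixes x :: "nat \<Rightarrow> real^'n"
  assumes "s \<ge> 1"
  shows "best_signals N s x y A \<noteq> {}"
proof -
  obtain \<sigma>0 where "admissible_signal N s x y A \<sigma>0"
    using admissible_signal_exists[OF assms] by blast
  moreover have "min_count N s \<sigma> < N + 1" for \<sigma>
  proof -
    have "min_count N s \<sigma> \<le> card (Iset N \<sigma> 1)"
      unfolding min_count_def using assms by (intro Min_le) auto
    also have "\<dots> \<le> card {1..N}"
      unfolding Iset_def by (rule card_mono) auto
    finally show ?thesis by simp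
  qed
  ultimately obtain \<sigma> where "admissible_signal N s x y A \<sigma>"
    "\<forall>\<sigma>'. admissible_signal N s x y A \<sigma>' \<longrightarrow> min_count N s \<sigma>' \<le> min_count N s \<sigma>"
    using ex_has_greatest_nat[of "admissible_signal N s x y A" \<sigma>0 "min_count N s" "N + 1"]
    by blast
  then show ?thesis unfolding best_signals_def by blast
qed

lemma sigmaA_admissible:
  fixes x :: "nat \<Rightarrow> real^'n"
  assumes "s \<ge> 1"
  shows "admissible_signal N s x y A (sigmaA N s x y A)"
proof -
  have "\<exists>!\<sigma>. \<sigma> \<in> best_signals N s x y A \<and> (\<forall>\<sigma>'\<in>best_signals N s x y A. \<sigma>' \<noteq> \<sigma> \<longrightarrow>
          (map \<sigma> [1..<N+1], map \<sigma>' [1..<N+1]) \<in> lexord {(a, b). a < b})"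
    using best_signals_nonempty[OF assms]
    by (intro ex1_lexord_least) (auto simp: best_signals_def admissible_signal_def)
  then have "sigmaA N s x y A \<in> best_signals N s x y A"
    unfolding sigmaA_def by (rule theI'[THEN conjunct1])
  then show ?thesis unfolding best_signals_def by blast
qed

lemma sigmaA_in_modes:
  fixes x :: "nat \<Rightarrow> real^'n"
  assumes "s \<ge> 1" and "t \<in> {1..N}"
  shows "sigmaA N s x y A t \<in> {1..s}"
  using sigmaA_admissible[OF assms(1)] assms(2) unfolding admissible_signal_def by blast

lemma span_nu_subset_eq_UNIV:
  fixes x :: "nat \<Rightarrow> real^'n"
  assumes "S \<subseteq> {1..N}" and "card S = nu N x"
  shows "span (x ` S) = UNIV"
proof -
  \<comment> \<open>The index \<open>\<nu>\<close> is well defined: \<open>m = N + 1\<close> qualifies vacuously.\<close>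
  have "\<exists>m. \<forall>S. S \<subseteq> {1..N} \<and> card S = m \<longrightarrow> subrank x S = CARD('n)"
  proof (intro exI[of _ "N + 1"] allI impI)
    fix S assume S: "S \<subseteq> {1..N} \<and> card S = N + 1"
    then have "card S \<le> card {1..N}" by (intro card_mono) auto
    with S show "subrank x S = CARD('n)" by simp
  qed
  then have "\<forall>S. S \<subseteq> {1..N} \<and> card S = nu N x \<longrightarrow> subrank x S = CARD('n)"
    unfolding nu_def by (rule LeastI_ex)
  with assms have "dim (x ` S) = CARD('n)" unfolding subrank_def by simp
  then have "dim (x ` S) = DIM(real^'n)" by simp
  then show ?thesis by (simp only: dim_eq_full)
qed

lemma orthogonal_spanning_set_eq_0:
  fixes d :: "'a::real_inner"
  assumes "span B = UNIV" and "\<And>b. b \<in> B \<Longrightarrow> d \<bullet> b = 0"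
  shows "d = 0"
proof -
  have "orthogonal d d"
    using assms by (intro orthogonal_to_span[of d B d]) (auto simp: orthogonal_def)
  then show ?thesis by (simp add: orthogonal_self)
qed

lemma image_eq_if_inj_on_subset:
  assumes "finite K" and "inj_on g K" and "g ` K \<subseteq> f ` K"
  shows "f ` K = g ` K"
proof -
  have "card (f ` K) \<le> card (g ` K)"
    using assms(2) card_image_le[OF assms(1), of f] by (simp add: card_image)
  then show ?thesis using card_seteq[OF finite_imageI[OF assms(1)] assms(3)] by simp
qed

lemma inner_diff_columns_eq_0_if_phi_eq:
  assumes "phi N s x y A = phi N s x y At"
    and "t \<in> I_A N s x y At i" and "sigmaA N s x y A t = j"
  shows "(At i - A j) \<bullet> x t = 0"
proof -
  have "t \<in> {1..N}" and "sigmaA N s x y At t = i"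
    using assms(2) by (auto simp: I_A_def Iset_def)
  then have "y t - x t \<bullet> A j = y t - x t \<bullet> At i"
    using fun_cong[OF assms(1), of t] assms(3) by (simp add: phi_def)
  then show ?thesis by (simp add: inner_commute[of "At i - A j"] inner_diff_right)
qed

lemma column_in_colset_if_phi_eq:
  fixes x :: "nat \<Rightarrow> real^'n"
  assumes "s \<ge> 1" and "phi N s x y A = phi N s x y At" and "i \<in> {1..s}"
    and "card (I_A N s x y At i) \<ge> s * nu N x"
  shows "At i \<in> colset s A"
proof -
  let ?I = "I_A N s x y At i"
  let ?\<sigma> = "sigmaA N s x y A"
  have I_sub: "?I \<subseteq> {1..N}" by (auto simp: I_A_def Iset_def)
  then have "?\<sigma> \<in> ?I \<rightarrow> {1..s}" using sigmaA_in_modes[OF assms(1)] by blast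
  then obtain j where j: "j \<in> {1..s}" and "card ?I \<le> card (?\<sigma> -` {j} \<inter> ?I) * s"
    using pigeonhole_card[of ?\<sigma> ?I "{1..s}"] assms(1) finite_subset[OF I_sub] by auto
  with assms(4) have "s * nu N x \<le> s * card (?\<sigma> -` {j} \<inter> ?I)"
    by (simp only: mult.commute[of _ s])
  then have "card (?\<sigma> -` {j} \<inter> ?I) \<ge> nu N x" using assms(1) by simp
  then obtain S where S: "S \<subseteq> ?\<sigma> -` {j} \<inter> ?I" "card S = nu N x"
    by (meson obtain_subset_with_card_n)
  have "span (x ` S) = UNIV" using S I_sub by (intro span_nu_subset_eq_UNIV) auto
  moreover have "(At i - A j) \<bullet> x t = 0" if "t \<in> S" for t
    using that S(1) assms(2) by (intro inner_diff_columns_eq_0_if_phi_eq) auto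
  ultimately have "At i - A j = 0"
    by (intro orthogonal_spanning_set_eq_0[of "x ` S"]) auto
  then show ?thesis using j by (simp add: colset_def)
qed

theorem lemma4:
  fixes N s :: nat and x :: "nat \<Rightarrow> real^'n" and y :: "nat \<Rightarrow> real"
    and At :: "nat \<Rightarrow> real^'n"
  assumes "N \<ge> 1" and "s \<ge> 1"
    and "subrank x {1..N} = CARD('n)"
    and "inj_on At {1..s}"
    and "\<forall>i\<in>{1..s}. card (I_A N s x y At i) \<ge> s * nu N x"
  shows "\<forall>A :: nat \<Rightarrow> real^'n. phi N s x y A = phi N s x y At \<longrightarrow> colset s A = colset s At"
proof (intro allI impI)
  fix A :: "nat \<Rightarrow> real^'n"
  assume "phi N s x y A = phi N s x y At"
  then have "At i \<in> colset s A" if "i \<in> {1..s}" for i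
    using column_in_colset_if_phi_eq[OF assms(2)] that bspec[OF assms(5) that] by blast
  then have "At ` {1..s} \<subseteq> A ` {1..s}" unfolding colset_def by blast
  then show "colset s A = colset s At"
    unfolding colset_def using assms(4) by (intro image_eq_if_inj_on_subset) auto
qed

end
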